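(* Let $m\ge1$, $n=2m$, $s=2^m-1$, $t=2^m+1$. Let $\alpha$ be a generator of $\mathbb{F}_{2^n}^\times$, $\beta=\alpha^t$ (a generator of $\mathbb{F}_{2^m}^\times$) and $\gamma=\alpha^s$ (an element of order $2^m+1$), and let $B_{i,j}=\mathrm{tr}_{\mathbb{F}_{2^n}/\mathbb{F}_2}(\beta^i\gamma^j)$ for $(i,j)\in\mathbb{Z}_s\times\mathbb{Z}_t$ (the trace De Bruijn torus), whose $j$-th column is $(B_{i,j})_{0\le i<s}$. Then for each integer $i$, the shifted sequence $\mathsf{DB}_\beta^{[i]}$ appears as a column of $B$ if and only if the polynomial $x^2+\beta^i x+1$ is irreducible over $\mathbb{F}_{2^m}$. Moreover, such a column occurs with multiplicity two, corresponding to the two indices $j$ and $-j\in\mathbb{Z}/t\mathbb{Z}$ satisfying $\mathrm{tr}_{\mathbb{F}_{2^n}/\mathbb{F}_{2^m}}(\gamma^j)=\beta^i$.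
   Context: $\mathrm{tr}_{K/F}$ denotes the field trace. $\mathsf{DB}_\beta=(\mathrm{tr}_{\mathbb{F}_{2^m}/\mathbb{F}_2}(\beta^k))_{0\le k<s}$ is the standard trace De Bruijn sequence, and $\mathsf{DB}_\beta^{[i]}=(\mathrm{tr}_{\mathbb{F}_{2^m}/\mathbb{F}_2}(\beta^{i+k}))_{0\le k<s}$ its cyclic shift by $i$ (indices mod $s$). *)

theory Defs
  imports "HOL-Algebra.Algebra"
begin

definition abs_trace :: "('a, 'b) ring_scheme \<Rightarrow> nat \<Rightarrow> 'a \<Rightarrow> 'a" where
  "abs_trace R d x = (\<Oplus>\<^bsub>R\<^esub> k \<in> {..<d}. x [^]\<^bsub>R\<^esub> ((2::nat) ^ k))"

definition rel_trace :: "('a, 'b) ring_scheme \<Rightarrow> nat \<Rightarrow> 'a \<Rightarrow> 'a" where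
  "rel_trace R m x = x \<oplus>\<^bsub>R\<^esub> x [^]\<^bsub>R\<^esub> ((2::nat) ^ m)"

definition subfield_pow :: "('a, 'b) ring_scheme \<Rightarrow> nat \<Rightarrow> 'a set" where
  "subfield_pow R m = {x \<in> carrier R. x [^]\<^bsub>R\<^esub> ((2::nat) ^ m) = x}"

definition mult_generator :: "('a, 'b) ring_scheme \<Rightarrow> 'a \<Rightarrow> bool" where
  "mult_generator R a \<longleftrightarrow> a \<in> carrier R - {\<zero>\<^bsub>R\<^esub>} \<and>
     (\<forall>x \<in> carrier R - {\<zero>\<^bsub>R\<^esub>}. \<exists>k::nat. x = a [^]\<^bsub>R\<^esub> k)"

definition torus_column :: "('a, 'b) ring_scheme \<Rightarrow> nat \<Rightarrow> 'a \<Rightarrow> 'a \<Rightarrow> nat \<Rightarrow> nat \<Rightarrow> 'a" where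
  "torus_column R n \<beta> \<gamma> j k = abs_trace R n (\<beta> [^]\<^bsub>R\<^esub> k \<otimes>\<^bsub>R\<^esub> \<gamma> [^]\<^bsub>R\<^esub> j)"

definition DB_shift :: "('a, 'b) ring_scheme \<Rightarrow> nat \<Rightarrow> 'a \<Rightarrow> int \<Rightarrow> nat \<Rightarrow> 'a" where
  "DB_shift R m \<beta> i k = abs_trace R m (\<beta> [^]\<^bsub>R\<^esub> (i + int k))"

end

(* Write q = 2^m, so that s = q - 1, t = q + 1, and let K = F_q inside F_(q^2).
   The absolute trace of F_(q^2) is the trace of K composed with the relative trace
   y |-> y + y^q, and beta^k lies in K, so column j of the torus is k |-> tr_K(beta^k * T_j)
   with T_j = gamma^j + gamma^(jq) = gamma^j + gamma^(-j), while DB_beta^[i] is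
   k |-> tr_K(beta^k * beta^i).  The trace form of K is nondegenerate and beta generates K^*,
   so column j equals DB_beta^[i] iff T_j = beta^i.

   Let psi(x) = x + 1/x, so T_j = psi(gamma^j).  Since psi(x) = psi(y) iff y = x or y = 1/x,
   psi is at most two-to-one; it maps the 2s elements other than 1 of K^* and of the group
   generated by gamma (of order t) into K^*, which has s elements, hence onto K^*.  That group
   meets K only in 1, so every c in K^* is psi of an element of K^* or of some gamma^j, but not
   both.  Now psi(z) = c says that z is a root of x^2 + c x + 1, and this quadratic is
   irreducible over K iff it has no root in K.  The solutions of T_j = beta^i are j and t - j. *)

theory Submission imports Defs begin

lemma card_le_double_card_image:
  assumes "finite A"
    and "\<And>x y. x \<in> A \<Longrightarrow> y \<in> A \<Longrightarrow> f x = f y \<Longrightarrow> y = x \<or> y = g x"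
  shows "card A \<le> 2 * card (f ` A)"
proof -
  define h where "h z = (SOME x. x \<in> A \<and> f x = z)" for z
  have h: "h (f x) \<in> A \<and> f (h (f x)) = f x" if "x \<in> A" for x
    unfolding h_def using that by (metis (mono_tags, lifting) someI)
  have "A \<subseteq> h ` f ` A \<union> (g \<circ> h) ` f ` A"
  proof
    fix x assume "x \<in> A"
    with h assms(2)[of "h (f x)" x] show "x \<in> h ` f ` A \<union> (g \<circ> h) ` f ` A"
      by (metis UnI1 UnI2 comp_apply imageI)
  qed
  then have "card A \<le> card (h ` f ` A) + card ((g \<circ> h) ` f ` A)"
    using assms(1) by (meson card_Un_le card_mono finite_Un finite_imageI le_trans)
  also have "\<dots> \<le> 2 * card (f ` A)"
    using card_image_le[of "f ` A" h] card_image_le[of "f ` A" "g \<circ> h"] assms(1) by simp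
  finally show ?thesis .
qed

lemma (in abelian_monoid) finsum_swap:
  assumes "finite A" "finite B" "\<And>a b. a \<in> A \<Longrightarrow> b \<in> B \<Longrightarrow> g a b \<in> carrier G"
  shows "(\<Oplus>a\<in>A. \<Oplus>b\<in>B. g a b) = (\<Oplus>b\<in>B. \<Oplus>a\<in>A. g a b)"
  using assms
proof (induction A rule: finite_induct)
  case (insert a A)
  then have "(\<Oplus>a'\<in>insert a A. \<Oplus>b\<in>B. g a' b) = (\<Oplus>b\<in>B. g a b) \<oplus> (\<Oplus>b\<in>B. \<Oplus>a'\<in>A. g a' b)"
    by (simp add: finsum_insert Pi_def)
  also have "\<dots> = (\<Oplus>b\<in>B. g a b \<oplus> (\<Oplus>a'\<in>A. g a' b))"
    using insert.prems by (simp add: finsum_addf Pi_def)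
  also have "\<dots> = (\<Oplus>b\<in>B. \<Oplus>a'\<in>insert a A. g a' b)"
    using insert by (intro finsum_cong') (auto simp: finsum_insert Pi_def)
  finally show ?case .
qed simp

lemma (in group) pow_eq_pow_iff_mod:
  assumes "x \<in> carrier G"
  shows "x [^] (a::nat) = x [^] (b::nat) \<longleftrightarrow> a mod ord x = b mod ord x"
proof -
  have "x [^] a = x [^] b \<longleftrightarrow> x [^] int a = x [^] int b" by (simp add: int_pow_int)
  also have "\<dots> \<longleftrightarrow> int (ord x) dvd int b - int a" using assms by (rule int_pow_eq)
  also have "\<dots> \<longleftrightarrow> a mod ord x = b mod ord x"
    by (metis mod_eq_dvd_iff of_nat_eq_iff of_nat_mod)
  finally show ?thesis .
qed

lemma (in domain) nat_pow_nonzero: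
  "x \<in> carrier R \<Longrightarrow> x \<noteq> \<zero> \<Longrightarrow> x [^] (n::nat) \<noteq> \<zero>"
  by (induction n) (auto simp: integral_iff)

(* Ring_Divisibility declares a second constant mult_of; field_mult_group is about this one. *)
lemma (in field) int_pow_mult_of:
  assumes "x \<in> carrier R" "x \<noteq> \<zero>"
  shows "x [^]\<^bsub>Multiplicative_Group.mult_of R\<^esub> (z::int) = x [^] z"
proof -
  have "x [^] n \<in> carrier (Multiplicative_Group.mult_of R)" for n :: nat
    using assms nat_pow_nonzero by simp
  then have inv_eq: "inv\<^bsub>Multiplicative_Group.mult_of R\<^esub> (x [^] n) = inv (x [^] n)" for n :: nat
    by (rule m_inv_mult_of)
  show ?thesis
    unfolding int_pow_def2 Multiplicative_Group.nat_pow_mult_of inv_eq ..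
qed

section \<open>Finite fields of characteristic two\<close>

lemma (in field) pow_card_carrier:
  assumes "finite (carrier R)" "x \<in> carrier R"
  shows "x [^] card (carrier R) = x"
proof (cases "x = \<zero>")
  case True
  have "card (carrier R) \<noteq> 0" using assms by auto
  with True show ?thesis by (simp add: nat_pow_zero)
next
  case False
  interpret G: group "Multiplicative_Group.mult_of R" by (rule field_mult_group)
  have "x [^] (card (carrier R) - 1) = \<one>"
    using G.pow_order_eq_1[of x] assms False
    by (simp add: order_mult_of order_def Multiplicative_Group.nat_pow_mult_of)
  moreover have "card (carrier R) = Suc (card (carrier R) - 1)"
    using assms(1) one_closed card_gt_0_iff by (metis Suc_diff_1 empty_iff)
  ultimately show ?thesis using assms(2) by (metis l_one nat_pow_Suc)
qed

lemma (in field) char_two_if_card_power_of_two: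
  assumes "finite (carrier R)" "card (carrier R) = 2 ^ n" "n \<ge> 1"
  shows "\<one> \<oplus> \<one> = \<zero>"
proof -
  obtain k where "n = Suc k" using assms(3) by (cases n) auto
  then have "card (carrier R) = 2 * 2 ^ k" using assms(2) by simp
  then have "(\<ominus> \<one>) [^] (2 * 2 ^ k :: nat) = \<ominus> \<one>"
    using pow_card_carrier[OF assms(1), of "\<ominus> \<one>"] by simp
  then have "((\<ominus> \<one>) [^] (2::nat)) [^] ((2::nat) ^ k) = \<ominus> \<one>"
    by (simp only: nat_pow_pow add.inv_closed one_closed)
  moreover have "(\<ominus> \<one>) [^] (2::nat) = \<one>"
    by (simp add: numeral_2_eq_2 l_minus r_minus)
  ultimately have "\<ominus> \<one> = \<one>" by simp
  then show ?thesis by (metis one_closed r_neg)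
qed

locale char2_cring = cring +
  assumes one_plus_one: "\<one> \<oplus> \<one> = \<zero>"
begin

lemma add_self [simp]: "x \<in> carrier R \<Longrightarrow> x \<oplus> x = \<zero>"
proof -
  assume x: "x \<in> carrier R"
  then have "x \<oplus> x = (\<one> \<oplus> \<one>) \<otimes> x" by algebra
  with x show ?thesis by (simp add: one_plus_one)
qed

lemma minus_eq_self [simp]: "x \<in> carrier R \<Longrightarrow> \<ominus> x = x"
  by (metis add_self minus_equality)

lemma add_eq_zero_iff: "x \<in> carrier R \<Longrightarrow> y \<in> carrier R \<Longrightarrow> x \<oplus> y = \<zero> \<longleftrightarrow> x = y"
  by (metis add_self minus_equality minus_eq_self)

lemma add_square: "x \<in> carrier R \<Longrightarrow> y \<in> carrier R \<Longrightarrow> (x \<oplus> y) [^] (2::nat) = x [^] (2::nat) \<oplus> y [^] (2::nat)"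
proof -
  assume x: "x \<in> carrier R" and y: "y \<in> carrier R"
  then have "(x \<oplus> y) \<otimes> (x \<oplus> y) = x \<otimes> x \<oplus> y \<otimes> y \<oplus> (x \<otimes> y \<oplus> x \<otimes> y)"
    by algebra
  with x y show ?thesis by (simp add: numeral_2_eq_2)
qed

lemma add_pow_two_pow:
  "x \<in> carrier R \<Longrightarrow> y \<in> carrier R \<Longrightarrow>
    (x \<oplus> y) [^] ((2::nat) ^ k) = x [^] ((2::nat) ^ k) \<oplus> y [^] ((2::nat) ^ k)"
proof (induction k)
  case (Suc k)
  then show ?case
    by (simp add: power_Suc2 nat_pow_pow[symmetric] add_square del: power_Suc)
qed simp

lemma finsum_one_parity: "(\<Oplus>k\<in>{..<n::nat}. \<one>) = (if even n then \<zero> else \<one>)"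
  by (induction n) (auto simp: finsum_Suc2 lessThan_Suc finsum_insert one_plus_one)

lemma geometric_sum:
  assumes w: "w \<in> carrier R"
  shows "(\<Oplus>k\<in>{..<n}. w [^] k) \<otimes> (w \<oplus> \<one>) = w [^] (n::nat) \<oplus> \<one>"
proof (induction n)
  case (Suc n)
  let ?S = "\<Oplus>k\<in>{..<n}. w [^] k"
  have S: "?S \<in> carrier R" using w by simp
  have "(\<Oplus>k\<in>{..<Suc n}. w [^] k) \<otimes> (w \<oplus> \<one>) = (w [^] n \<oplus> ?S) \<otimes> (w \<oplus> \<one>)"
    using w by (simp add: lessThan_Suc finsum_insert)
  also have "\<dots> = w [^] n \<otimes> (w \<oplus> \<one>) \<oplus> ?S \<otimes> (w \<oplus> \<one>)"
    using w S nat_pow_closed[OF w, of n] by algebra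
  also have "\<dots> = w [^] n \<otimes> (w \<oplus> \<one>) \<oplus> (w [^] n \<oplus> \<one>)"
    by (simp only: Suc.IH)
  also have "\<dots> = w [^] n \<otimes> w \<oplus> (w [^] n \<oplus> w [^] n) \<oplus> \<one>"
    using w nat_pow_closed[OF w, of n] by algebra
  finally show ?case using w by simp
qed (use w in \<open>simp add: one_plus_one\<close>)

lemma abs_trace_closed: "x \<in> carrier R \<Longrightarrow> abs_trace R d x \<in> carrier R"
  unfolding abs_trace_def by simp

lemma abs_trace_add:
  assumes "x \<in> carrier R" "y \<in> carrier R"
  shows "abs_trace R d (x \<oplus> y) = abs_trace R d x \<oplus> abs_trace R d y"
  unfolding abs_trace_def using assms by (simp add: add_pow_two_pow finsum_addf)

lemma abs_trace_Suc:
  "x \<in> carrier R \<Longrightarrow> abs_trace R (Suc d) x = x [^] ((2::nat) ^ d) \<oplus> abs_trace R d x"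
  unfolding abs_trace_def by (simp add: lessThan_Suc finsum_insert)

lemma abs_trace_add_degree:
  assumes x: "x \<in> carrier R"
  shows "abs_trace R (a + b) x = abs_trace R a x \<oplus> abs_trace R b (x [^] ((2::nat) ^ a))"
proof (induction b)
  case (Suc b)
  have "(x [^] ((2::nat) ^ a)) [^] ((2::nat) ^ b) = x [^] ((2::nat) ^ (a + b))"
    using x by (simp add: nat_pow_pow power_add)
  with Suc x show ?case
    by (simp add: abs_trace_Suc abs_trace_closed a_lcomm)
qed (use x in \<open>simp add: abs_trace_closed abs_trace_def\<close>)

lemma abs_trace_double:
  assumes "x \<in> carrier R"
  shows "abs_trace R (2 * d) x = abs_trace R d (rel_trace R d x)"
  using assms by (simp add: mult_2 abs_trace_add_degree abs_trace_add rel_trace_def)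

end

locale char2_field = char2_cring + field
begin

lemma square_eq_one_iff: "w \<in> carrier R \<Longrightarrow> w \<otimes> w = \<one> \<longleftrightarrow> w = \<one>"
proof
  assume w: "w \<in> carrier R" and "w \<otimes> w = \<one>"
  then have "(w \<oplus> \<one>) \<otimes> (w \<oplus> \<one>) = w \<otimes> w \<oplus> \<one> \<oplus> (w \<oplus> w)"
    by algebra
  also have "\<dots> = \<zero>" using w \<open>w \<otimes> w = \<one>\<close> one_plus_one by simp
  finally have "(w \<oplus> \<one>) \<otimes> (w \<oplus> \<one>) = \<zero>" .
  with w show "w = \<one>" by (simp add: integral_iff add_eq_zero_iff)
qed simp

lemma finsum_powers_root_of_unity:
  assumes w: "w \<in> carrier R" and "w [^] (n::nat) = \<one>"
  shows "(\<Oplus>k\<in>{..<n}. w [^] k) = (if w = \<one> \<and> odd n then \<one> else \<zero>)"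
proof (cases "w = \<one>")
  case True
  then have "(\<Oplus>k\<in>{..<n}. w [^] k) = (\<Oplus>k\<in>{..<n}. \<one>)"
    by (intro finsum_cong') auto
  with True show ?thesis by (simp add: finsum_one_parity)
next
  case False
  have "(\<Oplus>k\<in>{..<n}. w [^] k) \<otimes> (w \<oplus> \<one>) = \<zero>"
    using geometric_sum[OF w, of n] assms(2) one_plus_one by simp
  moreover have "w \<oplus> \<one> \<noteq> \<zero>" using w False by (simp add: add_eq_zero_iff)
  ultimately show ?thesis using w False by (simp add: integral_iff)
qed

end

section \<open>The map x + 1/x and self-reciprocal quadratics\<close>

definition plus_inv :: "('a, 'b) ring_scheme \<Rightarrow> 'a \<Rightarrow> 'a" where
  "plus_inv R x = x \<oplus>\<^bsub>R\<^esub> inv\<^bsub>R\<^esub> x"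

context field
begin

lemma nonzero_inv_facts:
  assumes "x \<in> carrier R" "x \<noteq> \<zero>"
  shows "inv x \<in> carrier R" "x \<otimes> inv x = \<one>" "inv x \<otimes> x = \<one>" "inv x \<noteq> \<zero>"
  using assms field_Units by auto

lemma plus_inv_closed: "x \<in> carrier R \<Longrightarrow> x \<noteq> \<zero> \<Longrightarrow> plus_inv R x \<in> carrier R"
  unfolding plus_inv_def using nonzero_inv_facts by simp

lemma plus_inv_eqD:
  assumes v: "v \<in> carrier R" "v \<noteq> \<zero>" and w: "w \<in> carrier R" "w \<noteq> \<zero>"
    and eq: "plus_inv R v = plus_inv R w"
  shows "v = w \<or> v = inv w"
proof -
  obtain a b where a: "a \<in> carrier R" "v \<otimes> a = \<one>" "inv v = a"
    and b: "b \<in> carrier R" "w \<otimes> b = \<one>" "inv w = b"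
    using nonzero_inv_facts v w by blast
  have "v \<otimes> w \<otimes> ((v \<oplus> a) \<ominus> (w \<oplus> b))
      = v \<otimes> v \<otimes> w \<oplus> (v \<otimes> a) \<otimes> w \<ominus> v \<otimes> w \<otimes> w \<ominus> v \<otimes> (w \<otimes> b)"
    using v(1) w(1) a(1) b(1) by algebra
  also have "\<dots> = (v \<ominus> w) \<otimes> (v \<otimes> w \<ominus> \<one>)"
    using v w by (simp only: a(2) b(2)) algebra
  finally have "(v \<ominus> w) \<otimes> (v \<otimes> w \<ominus> \<one>) = v \<otimes> w \<otimes> ((v \<oplus> a) \<ominus> (w \<oplus> b))" ..
  also have "(v \<oplus> a) \<ominus> (w \<oplus> b) = \<zero>"
    using eq v w a b unfolding plus_inv_def by simp
  finally have "(v \<ominus> w) \<otimes> (v \<otimes> w \<ominus> \<one>) = \<zero>"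
    using v w by simp
  then have "v \<ominus> w = \<zero> \<or> v \<otimes> w \<ominus> \<one> = \<zero>"
    using v w by (simp add: integral_iff)
  then show ?thesis
  proof
    assume "v \<otimes> w \<ominus> \<one> = \<zero>"
    then have "w \<otimes> v = \<one>" using v w by (simp add: m_comm)
    then show ?thesis using v w by (simp add: comm_inv_char)
  qed (use v w in simp)
qed

lemma plus_inv_inv: "x \<in> carrier R \<Longrightarrow> x \<noteq> \<zero> \<Longrightarrow> plus_inv R (inv x) = plus_inv R x"
  unfolding plus_inv_def using field_Units nonzero_inv_facts by (simp add: a_comm)

lemma plus_inv_eq_iff:
  assumes "v \<in> carrier R" "v \<noteq> \<zero>" "w \<in> carrier R" "w \<noteq> \<zero>"
  shows "plus_inv R v = plus_inv R w \<longleftrightarrow> v = w \<or> v = inv w"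
  using plus_inv_eqD[OF assms] plus_inv_inv[of w] assms by auto

lemma self_reciprocal_quadratic_root_iff:
  assumes c: "c \<in> carrier R" and z: "z \<in> carrier R"
  shows "eval [\<one>, c, \<one>] z = \<zero> \<longleftrightarrow> z \<noteq> \<zero> \<and> plus_inv R z = \<ominus> c"
proof (cases "z = \<zero>")
  case True
  with c show ?thesis by simp
next
  case False
  then have i: "inv z \<in> carrier R" "z \<otimes> inv z = \<one>" using nonzero_inv_facts z by auto
  have "eval [\<one>, c, \<one>] z = z \<otimes> z \<oplus> c \<otimes> z \<oplus> z \<otimes> inv z"
    using z c i by (simp add: numeral_2_eq_2 a_assoc)
  also have "\<dots> = z \<otimes> (plus_inv R z \<oplus> c)"
    unfolding plus_inv_def using z c i(1) by algebra
  finally have "eval [\<one>, c, \<one>] z = z \<otimes> (plus_inv R z \<oplus> c)" .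
  moreover have "plus_inv R z \<oplus> c = \<zero> \<longleftrightarrow> plus_inv R z = \<ominus> c"
    using plus_inv_closed[OF z False] c by (metis add.inv_closed l_neg sum_zero_eq_neg)
  ultimately show ?thesis
    using False z c plus_inv_closed[OF z False] by (simp add: integral_iff)
qed

end

lemma (in domain) pirreducible_imp_no_root:
  assumes K: "subfield K R" and p: "p \<in> carrier (K[X])" "pirreducible K p" "degree p \<noteq> 1"
    and z: "z \<in> K"
  shows "eval p z \<noteq> \<zero>"
proof
  assume root: "eval p z = \<zero>"
  interpret S: field "R\<lparr>carrier := K\<rparr>" using subfield_iff(2)[OF K] .
  have sr: "subring K R" using subfieldE(1)[OF K] .
  have U: "univ_poly (R\<lparr>carrier := K\<rparr>) (carrier (R\<lparr>carrier := K\<rparr>)) = (K[X])"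
    using univ_poly_consistent[OF sr] by simp
  have "S.roots p = {#}"
    using S.pirreducible_roots[of p] p U by simp
  moreover have "S.is_root p z"
    unfolding S.is_root_def using z root eval_consistent[OF sr] pirreducibleE(1)[OF sr p(1,2)]
    by auto
  ultimately show False using S.roots_mem_iff_is_root[of p] p U by simp
qed

lemma (in domain) no_root_imp_pirreducible:
  assumes K: "subfield K R" and p: "p \<in> carrier (K[X])" and deg: "degree p = 2"
    and no_root: "\<forall>z\<in>K. eval p z \<noteq> \<zero>"
  shows "pirreducible K p"
proof -
  have sr: "subring K R" using subfieldE(1)[OF K] .
  show "pirreducible K p"
  proof (rule pirreducibleI[OF sr p])
    show "p \<noteq> []" using deg by auto
    show "p \<notin> Units (K[X])" using deg by (auto simp: univ_poly_units'[OF K])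
    fix f g assume f: "f \<in> carrier (K[X])" and g: "g \<in> carrier (K[X])"
      and fg: "p = f \<otimes>\<^bsub>K[X]\<^esub> g"
    show "f \<in> Units (K[X]) \<or> g \<in> Units (K[X])"
    proof (rule ccontr)
      assume nonunits: "\<not> (f \<in> Units (K[X]) \<or> g \<in> Units (K[X]))"
      have pf: "polynomial K f" "polynomial K g" using f g univ_poly_carrier by auto
      have p_mult: "p = poly_mult f g" using fg by (simp add: univ_poly_mult)
      then have "degree f + degree g = 2" "f \<noteq> []" "g \<noteq> []"
        using poly_mult_degree_eq[OF sr pf] deg by (auto split: if_splits)
      moreover have "degree f \<noteq> 0" "degree g \<noteq> 0"
        using nonunits f g calculation univ_poly_units'[OF K] by auto
      ultimately have "degree f = 1" by linarith
      then obtain y where y: "y \<in> K" "eval f y = \<zero>"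
        using degree_one_root[OF K f] subringE(5)[OF sr] by blast
      have sets: "set f \<subseteq> carrier R" "set g \<subseteq> carrier R" and yc: "y \<in> carrier R"
        using pf y(1) subringE(1)[OF sr] unfolding polynomial_def by auto
      have "eval p y = eval f y \<otimes> eval g y"
        unfolding p_mult by (rule eval_poly_mult[OF sets yc])
      also have "\<dots> = \<zero>" using y(2) eval_in_carrier[OF sets(2) yc] by simp
      finally show False using no_root y(1) by simp
    qed
  qed
qed

context char2_field
begin

lemma plus_inv_eq_zero_iff: "x \<in> carrier R \<Longrightarrow> x \<noteq> \<zero> \<Longrightarrow> plus_inv R x = \<zero> \<longleftrightarrow> x = \<one>"
  unfolding plus_inv_def
  by (metis add_eq_zero_iff nonzero_inv_facts(1,2) square_eq_one_iff inv_one)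

end

section \<open>The trace De Bruijn torus\<close>

locale trace_torus = field R for R (structure) +
  fixes m :: nat and \<alpha> :: 'a
  assumes finite_carrier: "finite (carrier R)"
    and m_pos: "m \<ge> 1"
    and card_carrier: "card (carrier R) = 2 ^ (2 * m)"
    and generator: "mult_generator R \<alpha>"
begin

sublocale char2_field
proof unfold_locales
  show "\<one> \<oplus> \<one> = \<zero>"
    using char_two_if_card_power_of_two[OF finite_carrier card_carrier] m_pos by simp
qed

sublocale G: group "Multiplicative_Group.mult_of R"
  by (rule field_mult_group)

definition "q = (2::nat) ^ m"
definition "s = q - 1"
definition "t = q + 1"
definition "beta = \<alpha> [^] t"
definition "gamma = \<alpha> [^] s"
definition "K = subfield_pow R m"

lemma q_ge_2: "q \<ge> 2"
  using power_increasing[OF m_pos, of "2::nat"] by (simp add: q_def)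

lemma s_pos: "s > 0" and q_eq: "q = s + 1" and t_eq: "t = s + 2"
  using q_ge_2 by (auto simp: s_def t_def)

lemma t_pos: "t > 0"
  by (simp add: t_def)

lemma s_odd: "odd s" and t_odd: "odd t"
proof -
  have "even q" using m_pos by (simp add: q_def)
  then show "odd s" "odd t" using q_eq t_eq by auto
qed

lemma card_carrier_eq: "card (carrier R) = q * q"
  by (simp add: card_carrier q_def power_mult power2_eq_square mult.commute)

lemma card_units: "card (carrier R - {\<zero>}) = s * t"
proof -
  have "card (carrier R - {\<zero>}) = q * q - 1"
    using finite_carrier card_carrier_eq by (simp add: card_Diff_singleton)
  also have "\<dots> = s * t" by (cases q) (simp_all add: s_def t_def algebra_simps)
  finally show ?thesis .
qed

lemma alpha_unit: "\<alpha> \<in> carrier R - {\<zero>}"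
  using generator unfolding mult_generator_def by blast

lemma ord_alpha: "G.ord \<alpha> = s * t"
proof -
  have \<alpha>: "\<alpha> \<in> carrier (Multiplicative_Group.mult_of R)" using alpha_unit by simp
  have "G.ord \<alpha> \<noteq> 0" using G.ord_ge_1[OF _ \<alpha>] finite_carrier by simp
  then have "generate (Multiplicative_Group.mult_of R) {\<alpha>} = {\<alpha> [^] k | k. k \<in> (UNIV :: nat set)}"
    using G.generate_pow_nat[OF \<alpha>] by (simp add: Multiplicative_Group.nat_pow_mult_of)
  also have "\<dots> = carrier R - {\<zero>}"
    using generator alpha_unit nat_pow_nonzero unfolding mult_generator_def by auto
  finally show ?thesis using G.generate_pow_card[OF \<alpha>] card_units by simp
qed

lemma ord_pow_alpha:
  assumes "d dvd s * t" shows "G.ord (\<alpha> [^] d) = s * t div d"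
proof -
  have "d \<noteq> 0" using dvd_pos_nat[OF _ assms] s_pos t_pos by simp
  moreover have "gcd (s * t) d = d" using assms by (rule gcd_nat.absorb2)
  ultimately show ?thesis
    using G.ord_pow_gen[of \<alpha> d] alpha_unit ord_alpha
    by (simp add: Multiplicative_Group.nat_pow_mult_of)
qed

lemma beta_unit: "beta \<in> carrier R - {\<zero>}" and gamma_unit: "gamma \<in> carrier R - {\<zero>}"
  using alpha_unit nat_pow_nonzero by (auto simp: beta_def gamma_def)

lemma ord_beta: "G.ord beta = s"
  unfolding beta_def using ord_pow_alpha[of t] t_pos by simp

lemma ord_gamma: "G.ord gamma = t"
  unfolding gamma_def using ord_pow_alpha[of s] s_pos by simp

lemma alpha_pow_eq_iff: "\<alpha> [^] (a::nat) = \<alpha> [^] (b::nat) \<longleftrightarrow> a mod (s * t) = b mod (s * t)"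
  using G.pow_eq_pow_iff_mod[of \<alpha> a b] alpha_unit ord_alpha
  by (simp add: Multiplicative_Group.nat_pow_mult_of)

lemma beta_pow_eq_iff: "beta [^] (a::nat) = beta [^] (b::nat) \<longleftrightarrow> a mod s = b mod s"
  using G.pow_eq_pow_iff_mod[of beta a b] beta_unit ord_beta
  by (simp add: Multiplicative_Group.nat_pow_mult_of)

lemma gamma_pow_eq_iff: "gamma [^] (a::nat) = gamma [^] (b::nat) \<longleftrightarrow> a mod t = b mod t"
  using G.pow_eq_pow_iff_mod[of gamma a b] gamma_unit ord_gamma
  by (simp add: Multiplicative_Group.nat_pow_mult_of)

lemma beta_pow_s: "beta [^] s = \<one>"
  using beta_pow_eq_iff[of s 0] by simp

lemma gamma_pow_t: "gamma [^] t = \<one>"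
  using gamma_pow_eq_iff[of t 0] by simp

lemma beta_int_pow: "beta [^] (i::int) = beta [^] nat (i mod int s)"
proof -
  have "beta [^]\<^bsub>Multiplicative_Group.mult_of R\<^esub> i
      = beta [^]\<^bsub>Multiplicative_Group.mult_of R\<^esub> int (nat (i mod int s))"
    using G.int_pow_eq[of beta] beta_unit ord_beta s_pos by (simp add: mod_eq_dvd_iff[symmetric])
  then show ?thesis
    using beta_unit by (simp add: int_pow_mult_of int_pow_int)
qed

lemma K_eq: "K = {x \<in> carrier R. x [^] q = x}"
  unfolding K_def subfield_pow_def q_def ..

lemma pow_q_pow_q: "x \<in> carrier R \<Longrightarrow> (x [^] q) [^] q = x"
  using pow_card_carrier[OF finite_carrier] card_carrier_eq by (simp add: nat_pow_pow)

lemma unit_in_K_pow_s: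
  assumes "x \<in> K" "x \<noteq> \<zero>" shows "x [^] s = \<one>"
proof -
  have x: "x \<in> carrier R" "x [^] q = x" using assms(1) by (auto simp: K_eq)
  have "x \<otimes> x [^] s = x [^] Suc s" using x(1) by (rule nat_pow_Suc2[symmetric])
  also have "\<dots> = x \<otimes> \<one>" using x q_eq by simp
  finally have "x \<otimes> x [^] s = x \<otimes> \<one>" .
  with x(1) assms(2) show ?thesis by (subst (asm) m_lcancel) simp_all
qed

lemma K_add_closed: "x \<in> K \<Longrightarrow> y \<in> K \<Longrightarrow> x \<oplus> y \<in> K"
  by (simp add: K_eq q_def add_pow_two_pow)

lemma K_subfield: "subfield K R"
proof (rule subfieldI')
  show "subring K R"
  proof (rule subringI)
    show "K \<subseteq> carrier R" "\<one> \<in> K" by (auto simp: K_eq)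
    show "\<ominus> x \<in> K" if "x \<in> K" for x using that by (auto simp: K_eq)
    show "x \<otimes> y \<in> K" if "x \<in> K" "y \<in> K" for x y
      using that by (simp add: K_eq nat_pow_distrib)
    show "x \<oplus> y \<in> K" if "x \<in> K" "y \<in> K" for x y
      using that by (rule K_add_closed)
  qed
next
  fix x assume x: "x \<in> K - {\<zero>}"
  then have "x \<in> carrier R" by (simp add: K_eq)
  moreover have "x \<otimes> x [^] (s - 1) = \<one>"
  proof -
    have "x \<otimes> x [^] (s - 1) = x [^] Suc (s - 1)"
      using \<open>x \<in> carrier R\<close> by (rule nat_pow_Suc2[symmetric])
    then show ?thesis using unit_in_K_pow_s[of x] x s_pos by simp
  qed
  ultimately have "inv x = x [^] (s - 1)" by (simp add: comm_inv_char)
  also have "\<dots> \<in> K"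
  proof -
    have xc: "x \<in> carrier R" "x [^] q = x" using x by (auto simp: K_eq)
    have "(x [^] (s - 1)) [^] q = (x [^] q) [^] (s - 1)"
      using xc(1) by (simp add: nat_pow_pow mult.commute)
    then show ?thesis using xc by (simp add: K_eq)
  qed
  finally show "inv x \<in> K" .
qed

lemma beta_pow_in_K: "beta [^] (a::nat) \<in> K"
proof -
  have "(beta [^] a) [^] q = beta [^] (a * q)"
    using beta_unit by (simp add: nat_pow_pow)
  also have "\<dots> = beta [^] a"
    unfolding beta_pow_eq_iff using q_eq by simp
  finally have "(beta [^] a) [^] q = beta [^] a" .
  then show ?thesis using beta_unit by (simp add: K_eq)
qed

lemma unit_in_K_eq_beta_pow:
  assumes "x \<in> K" "x \<noteq> \<zero>" shows "\<exists>a<s. x = beta [^] a"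
proof -
  obtain k :: nat where k: "x = \<alpha> [^] k"
    using generator assms unfolding mult_generator_def K_eq by auto
  have "\<alpha> [^] (k * s) = \<alpha> [^] (0::nat)"
    using unit_in_K_pow_s[OF assms] k alpha_unit by (simp add: nat_pow_pow)
  then have "s * t dvd s * k"
    unfolding alpha_pow_eq_iff by (simp add: mod_eq_0_iff_dvd mult.commute)
  then obtain a where "k = t * a" using s_pos by (auto elim: dvdE)
  then have "x = beta [^] (a mod s)"
    using k alpha_unit beta_pow_eq_iff[of a "a mod s"] by (simp add: beta_def nat_pow_pow)
  then show ?thesis using s_pos by (metis mod_less_divisor)
qed

lemma units_of_K: "K - {\<zero>} = (\<lambda>a. beta [^] a) ` {..<s}"
  using unit_in_K_eq_beta_pow beta_pow_in_K beta_unit nat_pow_nonzero by auto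

lemma card_units_of_K: "card (K - {\<zero>}) = s"
proof -
  have "inj_on (\<lambda>a. beta [^] a) {..<s}" by (rule inj_onI) (simp add: beta_pow_eq_iff)
  then show ?thesis by (simp add: units_of_K card_image)
qed

lemma rel_trace_in_K: "x \<in> carrier R \<Longrightarrow> rel_trace R m x \<in> K"
  using pow_q_pow_q[of x] by (simp add: K_eq rel_trace_def q_def add_pow_two_pow a_comm)

lemma rel_trace_mult_K:
  "y \<in> K \<Longrightarrow> x \<in> carrier R \<Longrightarrow> rel_trace R m (y \<otimes> x) = y \<otimes> rel_trace R m x"
  by (simp add: K_eq rel_trace_def q_def[symmetric] nat_pow_distrib r_distr)

lemma gamma_pow_pow_q: "(gamma [^] (j::nat)) [^] q = inv (gamma [^] j)"
proof -
  have "j + j * q = t * j" by (simp add: t_def)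
  then have "gamma [^] j \<otimes> (gamma [^] j) [^] q = (gamma [^] t) [^] j"
    using gamma_unit by (simp add: nat_pow_pow nat_pow_mult)
  then have "gamma [^] j \<otimes> (gamma [^] j) [^] q = \<one>"
    using gamma_pow_t by simp
  then show ?thesis
    using gamma_unit by (intro comm_inv_char[symmetric]) simp_all
qed

lemma rel_trace_gamma_pow: "rel_trace R m (gamma [^] (j::nat)) = plus_inv R (gamma [^] j)"
  using gamma_pow_pow_q by (simp add: rel_trace_def plus_inv_def q_def)

lemma gamma_pow_in_K_iff: "gamma [^] (j::nat) \<in> K \<longleftrightarrow> gamma [^] j = \<one>"
proof
  assume "gamma [^] j \<in> K"
  then have "gamma [^] j \<otimes> gamma [^] j = \<one>"
    using gamma_pow_pow_q[of j] gamma_unit nat_pow_nonzero nonzero_inv_facts(2)[of "gamma [^] j"]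
    by (simp add: K_eq)
  then show "gamma [^] j = \<one>" using gamma_unit by (simp add: square_eq_one_iff)
qed (simp add: K_eq)

lemma beta_pow_mult_abs_trace:
  "beta [^] (k * (s - 1)) \<otimes> abs_trace R m (beta [^] k)
    = (\<Oplus>l\<in>{..<m}. (beta [^] ((2::nat) ^ l - 1)) [^] k)"
proof -
  have "beta [^] (k * (s - 1)) \<otimes> (beta [^] k) [^] ((2::nat) ^ l) = (beta [^] ((2::nat) ^ l - 1)) [^] k"
    for l
  proof -
    obtain e where "(2::nat) ^ l = Suc e" using not0_implies_Suc by fastforce
    then have "k * (s - 1) + k * 2 ^ l = ((2::nat) ^ l - 1) * k + s * k"
      using s_pos by (cases s) (simp_all add: algebra_simps)
    then have "beta [^] (k * (s - 1) + k * 2 ^ l) = beta [^] (((2::nat) ^ l - 1) * k)"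
      using beta_pow_eq_iff by simp
    then show ?thesis using beta_unit by (simp add: nat_pow_pow nat_pow_mult)
  qed
  then show ?thesis
    using beta_unit unfolding abs_trace_def by (simp add: finsum_rdistr)
qed

lemma finsum_powers_beta_two_pow_minus_one:
  assumes "l < m"
  shows "(\<Oplus>k\<in>{..<s}. (beta [^] ((2::nat) ^ l - 1)) [^] k) = (if l = 0 then \<one> else \<zero>)"
proof -
  have "(2::nat) ^ l < 2 ^ m" "(1::nat) \<le> 2 ^ l" using assms by simp_all
  then have "(2::nat) ^ l - 1 < s" unfolding s_def q_def by (rule diff_less_mono)
  moreover have "(2::nat) ^ l - 1 = 0 \<longleftrightarrow> l = 0"
    using one_less_power[of "2::nat" l] by (cases "l = 0") auto
  ultimately have "beta [^] ((2::nat) ^ l - 1) = \<one> \<longleftrightarrow> l = 0"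
    using beta_pow_eq_iff[of "2 ^ l - 1" 0] by simp
  moreover have "(beta [^] ((2::nat) ^ l - 1)) [^] s = \<one>"
    using beta_unit beta_pow_s by (simp add: nat_pow_pow mult.commute[of _ s] nat_pow_pow[symmetric])
  ultimately show ?thesis
    using beta_unit s_odd by (simp add: finsum_powers_root_of_unity)
qed

text \<open>Weighting \<open>abs_trace R m (beta [^] k)\<close> by \<open>beta [^] (k * (s - 1))\<close>, i.e. by the inverse of
  \<open>beta [^] k\<close>, and summing over \<open>k\<close> leaves only the Frobenius power \<open>l = 0\<close>.\<close>

lemma abs_trace_beta_pow_nonzero: "\<exists>k<s. abs_trace R m (beta [^] k) \<noteq> \<zero>"
proof (rule ccontr)
  assume "\<not> ?thesis"
  then have "\<zero> = (\<Oplus>k\<in>{..<s}. beta [^] (k * (s - 1)) \<otimes> abs_trace R m (beta [^] k))"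
    using beta_unit by (intro add.finprod_one_eqI[symmetric]) auto
  also have "\<dots> = (\<Oplus>k\<in>{..<s}. \<Oplus>l\<in>{..<m}. (beta [^] ((2::nat) ^ l - 1)) [^] k)"
    by (simp only: beta_pow_mult_abs_trace)
  also have "\<dots> = (\<Oplus>l\<in>{..<m}. \<Oplus>k\<in>{..<s}. (beta [^] ((2::nat) ^ l - 1)) [^] k)"
    using beta_unit by (intro finsum_swap) auto
  also have "\<dots> = (\<Oplus>l\<in>{..<m}. if 0 = l then \<one> else \<zero>)"
  proof (rule finsum_cong')
    show "(\<Oplus>k\<in>{..<s}. (beta [^] ((2::nat) ^ l - 1)) [^] k) = (if 0 = l then \<one> else \<zero>)"
      if "l \<in> {..<m}" for l
      using that finsum_powers_beta_two_pow_minus_one[of l] by auto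
  qed auto
  also have "\<dots> = \<one>"
    using add.finprod_singleton[of 0 "{..<m}" "\<lambda>_. \<one>"] m_pos by simp
  finally show False by simp
qed

lemma abs_trace_K_nondegenerate:
  assumes d: "d \<in> K" and zero: "\<And>k. k < s \<Longrightarrow> abs_trace R m (beta [^] k \<otimes> d) = \<zero>"
  shows "d = \<zero>"
proof (rule ccontr)
  assume "d \<noteq> \<zero>"
  then obtain a where a: "a < s" "d = beta [^] a" using unit_in_K_eq_beta_pow d by blast
  obtain k0 where k0: "k0 < s" "abs_trace R m (beta [^] k0) \<noteq> \<zero>"
    using abs_trace_beta_pow_nonzero by blast
  define k where "k = (k0 + s - a) mod s"
  have "beta [^] k \<otimes> d = beta [^] k0"
    using a k0(1) beta_unit beta_pow_eq_iff[of "k + a" k0]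
    by (simp add: k_def nat_pow_mult mod_add_left_eq)
  then show False using zero[of k] k0(2) s_pos by (simp add: k_def)
qed

lemma torus_column_eq:
  "torus_column R (2 * m) beta gamma j k = abs_trace R m (beta [^] k \<otimes> rel_trace R m (gamma [^] j))"
  using beta_unit gamma_unit beta_pow_in_K
  by (simp add: torus_column_def abs_trace_double rel_trace_mult_K)

lemma DB_shift_eq: "DB_shift R m beta i k = abs_trace R m (beta [^] k \<otimes> beta [^] i)"
proof -
  have "beta [^]\<^bsub>Multiplicative_Group.mult_of R\<^esub> (i + int k)
      = beta [^]\<^bsub>Multiplicative_Group.mult_of R\<^esub> i \<otimes> beta [^]\<^bsub>Multiplicative_Group.mult_of R\<^esub> int k"
    using beta_unit by (simp add: G.int_pow_mult)
  moreover have "beta [^] i \<in> carrier R" using beta_unit by (simp add: beta_int_pow)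
  ultimately show ?thesis
    using beta_unit
    by (simp add: DB_shift_def int_pow_mult_of int_pow_int Multiplicative_Group.nat_pow_mult_of m_comm)
qed

lemma column_eq_DB_shift_iff:
  "(\<forall>k<s. torus_column R (2 * m) beta gamma j k = DB_shift R m beta i k)
    \<longleftrightarrow> rel_trace R m (gamma [^] j) = beta [^] i"
  (is "?columns \<longleftrightarrow> ?T = ?c")
proof
  have T: "?T \<in> K" and c: "?c \<in> K"
    using gamma_unit rel_trace_in_K beta_pow_in_K by (auto simp: beta_int_pow)
  then have carr: "?T \<in> carrier R" "?c \<in> carrier R" by (auto simp: K_eq)
  assume ?columns
  then have eq: "abs_trace R m (beta [^] k \<otimes> ?T) = abs_trace R m (beta [^] k \<otimes> ?c)" if "k < s" for k
    using that by (simp add: torus_column_eq DB_shift_eq)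
  have "abs_trace R m (beta [^] k \<otimes> (?T \<oplus> ?c)) = \<zero>" if "k < s" for k
  proof -
    have "abs_trace R m (beta [^] k \<otimes> (?T \<oplus> ?c))
        = abs_trace R m (beta [^] k \<otimes> ?T) \<oplus> abs_trace R m (beta [^] k \<otimes> ?c)"
      using carr beta_unit by (simp add: r_distr abs_trace_add)
    then show ?thesis using eq[OF that] carr beta_unit by (simp add: abs_trace_closed)
  qed
  then have "?T \<oplus> ?c = \<zero>"
    using K_add_closed[OF T c] by (rule abs_trace_K_nondegenerate[rotated])
  then show "?T = ?c" using carr by (simp add: add_eq_zero_iff)
qed (simp add: torus_column_eq DB_shift_eq)

lemma inv_in_K: "x \<in> K \<Longrightarrow> x \<noteq> \<zero> \<Longrightarrow> inv x \<in> K"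
  using subfield_m_inv(1)[OF K_subfield] by simp

text \<open>The group of \<open>t\<close>-th roots of unity, i.e. the elements of norm one over \<open>K\<close>.\<close>

definition "unit_circle = (\<lambda>j. gamma [^] j) ` {..<t}"

lemma card_unit_circle: "card unit_circle = t"
proof -
  have "inj_on (\<lambda>j. gamma [^] j) {..<t}" by (rule inj_onI) (simp add: gamma_pow_eq_iff)
  then show ?thesis by (simp add: unit_circle_def card_image)
qed

lemma one_in_unit_circle: "\<one> \<in> unit_circle"
  using t_pos by (force simp: unit_circle_def)

lemma unit_circle_subset: "unit_circle \<subseteq> carrier R - {\<zero>}"
  using gamma_unit nat_pow_nonzero by (auto simp: unit_circle_def)

lemma card_nontrivial_units_of_K_and_circle:
  "card ((K - {\<zero>, \<one>}) \<union> (unit_circle - {\<one>})) = 2 * s"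
proof -
  have fin: "finite (K - {\<zero>})" "finite unit_circle" by (simp_all add: units_of_K unit_circle_def)
  have "card (K - {\<zero>, \<one>}) = s - 1"
  proof -
    have "K - {\<zero>, \<one>} = (K - {\<zero>}) - {\<one>}" by blast
    moreover have "\<one> \<in> K - {\<zero>}" by (simp add: K_eq)
    ultimately show ?thesis using fin(1) card_units_of_K by (simp add: card_Diff_singleton)
  qed
  moreover have "card (unit_circle - {\<one>}) = t - 1"
    using fin(2) one_in_unit_circle card_unit_circle by (simp add: card_Diff_singleton)
  moreover have "(K - {\<zero>, \<one>}) \<inter> (unit_circle - {\<one>}) = {}"
    using gamma_pow_in_K_iff by (auto simp: unit_circle_def)
  ultimately show ?thesis
    using fin t_eq s_pos by (simp add: card_Un_disjoint)
qed

lemma plus_inv_in_units_of_K: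
  assumes "x \<in> (K - {\<zero>, \<one>}) \<union> (unit_circle - {\<one>})"
  shows "plus_inv R x \<in> K - {\<zero>}"
proof -
  have x: "x \<in> carrier R" "x \<noteq> \<zero>" "x \<noteq> \<one>"
    using assms unit_circle_subset by (auto simp: K_eq)
  have "plus_inv R x \<in> K"
  proof (cases "x \<in> K")
    case True
    then show ?thesis using x by (simp add: plus_inv_def K_add_closed inv_in_K)
  next
    case False
    then obtain j :: nat where "x = gamma [^] j" using assms by (auto simp: unit_circle_def)
    then show ?thesis
      using gamma_unit rel_trace_in_K[of "gamma [^] j"] by (simp add: rel_trace_gamma_pow)
  qed
  then show ?thesis using x by (simp add: plus_inv_eq_zero_iff)
qed

text \<open>Since \<open>plus_inv R\<close> is at most two-to-one, the \<open>2 * s\<close> elements of this set cover all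
  \<open>s\<close> units of \<open>K\<close>.\<close>

lemma plus_inv_image_eq_units_of_K:
  "plus_inv R ` ((K - {\<zero>, \<one>}) \<union> (unit_circle - {\<one>})) = K - {\<zero>}"
  (is "plus_inv R ` ?A = _")
proof -
  have A: "x \<in> carrier R - {\<zero>}" if "x \<in> ?A" for x
    using that unit_circle_subset by (auto simp: K_eq)
  have "card ?A \<le> 2 * card (plus_inv R ` ?A)"
  proof (rule card_le_double_card_image[where g = "\<lambda>x. inv x"])
    show "finite ?A" using finite_carrier A by (meson DiffD1 finite_subset subsetI)
    show "y = x \<or> y = inv x" if "x \<in> ?A" "y \<in> ?A" "plus_inv R x = plus_inv R y" for x y
      using plus_inv_eq_iff[of y x] A that by auto
  qed
  then have "card (K - {\<zero>}) \<le> card (plus_inv R ` ?A)"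
    using card_nontrivial_units_of_K_and_circle card_units_of_K by linarith
  moreover have "plus_inv R ` ?A \<subseteq> K - {\<zero>}"
    by (rule image_subsetI) (rule plus_inv_in_units_of_K)
  moreover have "finite (K - {\<zero>})" by (simp add: units_of_K)
  ultimately show ?thesis by (simp add: card_seteq)
qed

lemma units_of_K_covered:
  assumes "c \<in> K" "c \<noteq> \<zero>"
  shows "(\<exists>z\<in>K. z \<noteq> \<zero> \<and> plus_inv R z = c) \<or> (\<exists>j<t. rel_trace R m (gamma [^] j) = c)"
proof -
  have "c \<in> plus_inv R ` ((K - {\<zero>, \<one>}) \<union> (unit_circle - {\<one>}))"
    using assms by (simp only: plus_inv_image_eq_units_of_K) simp
  then obtain x where x: "x \<in> (K - {\<zero>, \<one>}) \<union> (unit_circle - {\<one>})" "plus_inv R x = c"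
    by blast
  then consider "x \<in> K" "x \<noteq> \<zero>" | j where "j < t" "x = gamma [^] j"
    unfolding unit_circle_def by blast
  then show ?thesis using x(2) by cases (auto simp: rel_trace_gamma_pow)
qed

lemma rel_trace_gamma_pow_iff_no_root:
  assumes c: "c \<in> K" "c \<noteq> \<zero>"
  shows "(\<exists>j<t. rel_trace R m (gamma [^] j) = c) \<longleftrightarrow> (\<forall>z\<in>K. eval [\<one>, c, \<one>] z \<noteq> \<zero>)"
proof -
  have c_carrier: "c \<in> carrier R" using c by (simp add: K_eq)
  have root_iff: "eval [\<one>, c, \<one>] z = \<zero> \<longleftrightarrow> z \<noteq> \<zero> \<and> plus_inv R z = c" if "z \<in> K" for z
    using self_reciprocal_quadratic_root_iff[OF c_carrier] that c_carrier by (simp add: K_eq)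
  have "\<not> (\<exists>z\<in>K. z \<noteq> \<zero> \<and> plus_inv R z = c)" if "j < t" "rel_trace R m (gamma [^] j) = c" for j
  proof
    assume "\<exists>z\<in>K. z \<noteq> \<zero> \<and> plus_inv R z = c"
    then obtain z where z: "z \<in> K" "z \<noteq> \<zero>" "plus_inv R z = c" by blast
    then have "gamma [^] j = z \<or> gamma [^] j = inv z"
      using that gamma_unit nat_pow_nonzero plus_inv_eqD[of "gamma [^] j" z]
      by (simp add: K_eq rel_trace_gamma_pow)
    then have "gamma [^] j = \<one>" using z inv_in_K gamma_pow_in_K_iff by metis
    then show False using that c by (simp add: rel_trace_def)
  qed
  then show ?thesis using units_of_K_covered[OF c] root_iff by blast
qed

lemma rel_trace_gamma_pow_solutions:
  assumes j0: "j0 < t" "rel_trace R m (gamma [^] j0) = c" and c: "c \<noteq> \<zero>"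
  shows "{j. j < t \<and> rel_trace R m (gamma [^] j) = c} = {j0, t - j0}" and "j0 \<noteq> t - j0"
    and "j0 \<noteq> 0"
proof -
  show "j0 \<noteq> 0"
  proof
    assume "j0 = 0"
    then have "c = \<zero>" using j0(2) by (simp add: rel_trace_def)
    with c show False ..
  qed
  then show "j0 \<noteq> t - j0" using t_odd by presburger
  have g0: "gamma [^] j0 \<in> carrier R" "gamma [^] j0 \<noteq> \<zero>" using gamma_unit nat_pow_nonzero by auto
  have "gamma [^] j0 \<otimes> gamma [^] (t - j0) = \<one>"
    using j0(1) gamma_unit gamma_pow_t by (simp add: nat_pow_mult)
  then have inv_eq: "inv (gamma [^] j0) = gamma [^] (t - j0)" using gamma_unit by (simp add: comm_inv_char)
  have "rel_trace R m (gamma [^] j) = c \<longleftrightarrow> gamma [^] j = gamma [^] j0 \<or> gamma [^] j = gamma [^] (t - j0)"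
    for j :: nat
  proof -
    have "rel_trace R m (gamma [^] j) = c \<longleftrightarrow> plus_inv R (gamma [^] j) = plus_inv R (gamma [^] j0)"
      using j0 by (simp add: rel_trace_gamma_pow)
    also have "\<dots> \<longleftrightarrow> gamma [^] j = gamma [^] j0 \<or> gamma [^] j = inv (gamma [^] j0)"
      using plus_inv_eq_iff[of "gamma [^] j"] gamma_unit nat_pow_nonzero g0 by simp
    finally show ?thesis unfolding inv_eq .
  qed
  moreover have "gamma [^] j = gamma [^] j0 \<or> gamma [^] j = gamma [^] (t - j0) \<longleftrightarrow> j = j0 \<or> j = t - j0"
    if "j < t" for j :: nat
    using that j0(1) \<open>j0 \<noteq> 0\<close> by (simp add: gamma_pow_eq_iff)
  ultimately show "{j. j < t \<and> rel_trace R m (gamma [^] j) = c} = {j0, t - j0}"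
    using j0(1) \<open>j0 \<noteq> 0\<close> by auto
qed

lemma pirreducible_iff_no_root:
  assumes "c \<in> K"
  shows "pirreducible K [\<one>, c, \<one>] \<longleftrightarrow> (\<forall>z\<in>K. eval [\<one>, c, \<one>] z \<noteq> \<zero>)"
proof -
  have "\<one> \<in> K" by (simp add: K_eq)
  with assms have p: "[\<one>, c, \<one>] \<in> carrier (K[X])"
    by (simp add: univ_poly_carrier[symmetric] polynomial_def)
  have deg: "degree [\<one>, c, \<one>] = 2" by simp
  show ?thesis
    using pirreducible_imp_no_root[OF K_subfield p] no_root_imp_pirreducible[OF K_subfield p deg] deg
    by auto
qed

lemma beta_int_pow_unit_of_K: "beta [^] (i::int) \<in> K - {\<zero>}"
  using beta_pow_in_K beta_unit nat_pow_nonzero by (simp add: beta_int_pow)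

lemma DB_shift_column_iff_pirreducible:
  "(\<exists>j<t. \<forall>k<s. torus_column R (2 * m) beta gamma j k = DB_shift R m beta i k)
    \<longleftrightarrow> pirreducible K [\<one>, beta [^] i, \<one>]"
  using rel_trace_gamma_pow_iff_no_root[of "beta [^] i"] pirreducible_iff_no_root[of "beta [^] i"]
    beta_int_pow_unit_of_K
  by (simp add: column_eq_DB_shift_iff)

lemma DB_shift_column_indices:
  assumes "\<exists>j<t. \<forall>k<s. torus_column R (2 * m) beta gamma j k = DB_shift R m beta i k"
  defines "J \<equiv> {j. j < t \<and> (\<forall>k<s. torus_column R (2 * m) beta gamma j k = DB_shift R m beta i k)}"
  shows "J = {j. j < t \<and> rel_trace R m (gamma [^] j) = beta [^] i}"
    and "card J = 2"
    and "\<exists>j0<t. J = {j0, (t - j0) mod t}"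
proof -
  show J: "J = {j. j < t \<and> rel_trace R m (gamma [^] j) = beta [^] i}"
    unfolding J_def by (simp add: column_eq_DB_shift_iff)
  obtain j0 where j0: "j0 < t" "rel_trace R m (gamma [^] j0) = beta [^] i"
    using assms(1) by (auto simp: column_eq_DB_shift_iff)
  have "beta [^] i \<noteq> \<zero>" using beta_int_pow_unit_of_K by simp
  note solutions = rel_trace_gamma_pow_solutions[OF j0 this]
  show "card J = 2" using solutions by (simp add: J)
  show "\<exists>j0<t. J = {j0, (t - j0) mod t}"
    using solutions j0(1) by (intro exI[of _ j0]) (simp add: J)
qed

end

theorem mainTheorem6:
  fixes R (structure) and m n s t :: nat and \<alpha> \<beta> \<gamma> :: 'a and i :: int
  assumes "field R" and "finite (carrier R)"
    and "m \<ge> 1" and "n = 2 * m" and "s = 2 ^ m - 1" and "t = 2 ^ m + 1"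
    and "card (carrier R) = 2 ^ n"
    and "mult_generator R \<alpha>"
    and "\<beta> = \<alpha> [^] t" and "\<gamma> = \<alpha> [^] s"
  shows "((\<exists>j<t. \<forall>k<s. torus_column R n \<beta> \<gamma> j k = DB_shift R m \<beta> i k)
            \<longleftrightarrow> pirreducible (subfield_pow R m) [\<one>, \<beta> [^] i, \<one>])
       \<and> ((\<exists>j<t. \<forall>k<s. torus_column R n \<beta> \<gamma> j k = DB_shift R m \<beta> i k) \<longrightarrow>
            {j. j < t \<and> (\<forall>k<s. torus_column R n \<beta> \<gamma> j k = DB_shift R m \<beta> i k)}
              = {j. j < t \<and> rel_trace R m (\<gamma> [^] j) = \<beta> [^] i}
          \<and> card {j. j < t \<and> (\<forall>k<s. torus_column R n \<beta> \<gamma> j k = DB_shift R m \<beta> i k)} = 2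
          \<and> (\<exists>j0<t. {j. j < t \<and> (\<forall>k<s. torus_column R n \<beta> \<gamma> j k = DB_shift R m \<beta> i k)}
                     = {j0, (t - j0) mod t}))"
proof -
  interpret T: trace_torus R m \<alpha>
    using assms by (simp add: trace_torus_def trace_torus_axioms_def)
  have st: "s = T.s" "t = T.t" using assms by (simp_all add: T.s_def T.t_def T.q_def)
  have \<beta>\<gamma>: "\<beta> = T.beta" "\<gamma> = T.gamma" using assms st by (simp_all add: T.beta_def T.gamma_def)
  have "n = 2 * m" "subfield_pow R m = T.K" using assms by (simp_all add: T.K_def)
  then show ?thesis
    using T.DB_shift_column_iff_pirreducible[of i] T.DB_shift_column_indices[of i]
    unfolding st \<beta>\<gamma> by simp
qed

end
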